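(* Let $T$ be a triangle with no right angle. Then the complete 3-graph $K_4^3$ on four vertices (edges $123,124,134,234$) is forbidden for $T$.
   Context: A 3-graph is a 3-uniform hypergraph; $G$ is $F$-free if it has no (not necessarily induced) subhypergraph isomorphic to $F$. For a triangle $T$ with side lengths $a,b,c$ and $\varepsilon>0$, with $\varepsilon'=\varepsilon\min\{a,b,c\}$, a triangle $A'B'C'$ is $\varepsilon$-congruent to $T$ if there are $A,B,C\in\mathbb{R}^2$ with $ABC$ congruent to $T$ and $A',B',C'$ within distance $\varepsilon'$ of $A,B,C$ respectively. For finite $P\subseteq\mathbb{R}^2$, $\mathcal{H}(T,P,\varepsilon)$ is the 3-graph on $P$ whose edges are triples forming triangles $\varepsilon$-congruent to $T$. A 3-graph $H$ is forbidden for $T$ if there exists $\varepsilon>0$ such that for every $P\subseteq\mathbb{R}^2$ with $|P|=|V(H)|$, $\mathcal{H}(T,P,\varepsilon)$ is $H$-free. *)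

theory Defs
  imports "HOL-Analysis.Analysis"
begin

text \<open>A triangle T is given by its side lengths (a,b,c); we use the convention
  that a triangle ABC is congruent to T iff dist B C = a, dist C A = b, dist A B = c.\<close>

type_synonym tri = "real \<times> real \<times> real"

definition is_triangle :: "tri \<Rightarrow> bool" where
  "is_triangle T = (case T of (a, b, c) \<Rightarrow>
      0 < a \<and> 0 < b \<and> 0 < c \<and> a < b + c \<and> b < a + c \<and> c < a + b)"

definition no_right_angle :: "tri \<Rightarrow> bool" where
  "no_right_angle T = (case T of (a, b, c) \<Rightarrow>
      a\<^sup>2 + b\<^sup>2 \<noteq> c\<^sup>2 \<and> a\<^sup>2 + c\<^sup>2 \<noteq> b\<^sup>2 \<and> b\<^sup>2 + c\<^sup>2 \<noteq> a\<^sup>2)"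

definition congruent_to :: "tri \<Rightarrow> real^2 \<Rightarrow> real^2 \<Rightarrow> real^2 \<Rightarrow> bool" where
  "congruent_to T A B C = (case T of (a, b, c) \<Rightarrow>
      dist B C = a \<and> dist C A = b \<and> dist A B = c)"

definition eps_congruent :: "tri \<Rightarrow> real \<Rightarrow> real^2 \<Rightarrow> real^2 \<Rightarrow> real^2 \<Rightarrow> bool" where
  "eps_congruent T \<epsilon> A' B' C' = (case T of (a, b, c) \<Rightarrow>
      (\<exists>A B C. congruent_to T A B C \<and>
         dist A' A \<le> \<epsilon> * min a (min b c) \<and>
         dist B' B \<le> \<epsilon> * min a (min b c) \<and>
         dist C' C \<le> \<epsilon> * min a (min b c)))"

type_synonym 'v hgraph3 = "'v set \<times> 'v set set"

definition is_3graph :: "'v hgraph3 \<Rightarrow> bool" where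
  "is_3graph H = (\<forall>e\<in>snd H. e \<subseteq> fst H \<and> card e = 3)"

definition congr_hgraph :: "tri \<Rightarrow> (real^2) set \<Rightarrow> real \<Rightarrow> (real^2) hgraph3" where
  "congr_hgraph T P \<epsilon> = (P, {e. e \<subseteq> P \<and> card e = 3 \<and>
      (\<exists>x y z. e = {x, y, z} \<and> eps_congruent T \<epsilon> x y z)})"

definition contains_copy :: "'v hgraph3 \<Rightarrow> 'w hgraph3 \<Rightarrow> bool" where
  "contains_copy G F = (\<exists>f. inj_on f (fst F) \<and> f ` fst F \<subseteq> fst G \<and>
      (\<forall>e\<in>snd F. f ` e \<in> snd G))"

definition hfree :: "'v hgraph3 \<Rightarrow> 'w hgraph3 \<Rightarrow> bool" where
  "hfree G F = (\<not> contains_copy G F)"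

definition forbidden_for :: "'w hgraph3 \<Rightarrow> tri \<Rightarrow> bool" where
  "forbidden_for H T = (\<exists>\<epsilon>>0. \<forall>P :: (real^2) set.
      finite P \<and> card P = card (fst H) \<longrightarrow> hfree (congr_hgraph T P \<epsilon>) H)"

definition K43 :: "nat hgraph3" where
  "K43 = ({1, 2, 3, 4}, {{1, 2, 3}, {1, 2, 4}, {1, 3, 4}, {2, 3, 4}})"

end

theory Submission
  imports Defs
begin

text \<open>Heron's form 2(XY + YZ + ZX) - X^2 - Y^2 - Z^2 (sixteen times the squared area), the sum
  X + Y + Z and the product (X + Y - Z)(X - Y + Z)(Y + Z - X) are symmetric functions of the squared
  side lengths X, Y, Z, hence invariants of an unlabelled triangle; the product vanishes exactly for
  right triangles. If four points in the plane span four triangles with the invariants of T, the four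
  areas agree, which forces the points to form a parallelogram; equal sums of squared sides then give
  equal diagonals, so the parallelogram is a rectangle and its triangles are right-angled.
  Quantitatively: after translating one point to the origin, the total deviation of the four triangles'
  invariants from those of T is a continuous positive function, bounded below on the relevant compact
  set by some \<mu> > 0, whereas a triangle \<epsilon>-congruent to T has deviation below \<mu>/4 once
  \<epsilon> is small.\<close>

definition heron :: "real \<Rightarrow> real \<Rightarrow> real \<Rightarrow> real" where
  "heron X Y Z = 2 * (X * Y + Y * Z + Z * X) - X\<^sup>2 - Y\<^sup>2 - Z\<^sup>2"

definition pythag :: "real \<Rightarrow> real \<Rightarrow> real \<Rightarrow> real" where
  "pythag X Y Z = (X + Y - Z) * (X - Y + Z) * (Y + Z - X)"

definition sides_invariants :: "real \<Rightarrow> real \<Rightarrow> real \<Rightarrow> real \<times> real \<times> real" where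
  "sides_invariants X Y Z = (heron X Y Z, X + Y + Z, pythag X Y Z)"

definition tri_invariants :: "'a::metric_space \<Rightarrow> 'a \<Rightarrow> 'a \<Rightarrow> real \<times> real \<times> real" where
  "tri_invariants x y z = sides_invariants ((dist y z)\<^sup>2) ((dist z x)\<^sup>2) ((dist x y)\<^sup>2)"

lemma sides_invariants_swap:
  "sides_invariants Y X Z = sides_invariants X Y Z" "sides_invariants X Z Y = sides_invariants X Y Z"
  unfolding sides_invariants_def heron_def pythag_def by (simp_all add: algebra_simps)

lemma tri_invariants_swap:
  "tri_invariants y x z = tri_invariants x y z" "tri_invariants x z y = tri_invariants x y z"
  unfolding tri_invariants_def by (simp_all add: dist_commute sides_invariants_swap)

lemma tri_invariants_eq_if_set_eq:
  assumes "{p, q, r} = {x, y, z}"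
  shows "tri_invariants p q r = tri_invariants x y z"
proof -
  have "p \<in> {x, y, z}" "q \<in> {x, y, z}" "r \<in> {x, y, z}" "x \<in> {p, q, r}" "y \<in> {p, q, r}" "z \<in> {p, q, r}"
    using assms by blast+
  then show ?thesis
    unfolding tri_invariants_def by (auto simp: dist_commute sides_invariants_swap)
qed

lemma tri_invariants_translate:
  fixes x y z t :: "'a::real_normed_vector"
  shows "tri_invariants (x - t) (y - t) (z - t) = tri_invariants x y z"
  unfolding tri_invariants_def by (simp add: dist_norm)

definition cross2 :: "real^2 \<Rightarrow> real^2 \<Rightarrow> real" where
  "cross2 u v = u$1 * v$2 - u$2 * v$1"

lemma dist_vec2_sq:
  fixes x y :: "real^2"
  shows "(dist x y)\<^sup>2 = (x$1 - y$1)\<^sup>2 + (x$2 - y$2)\<^sup>2"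
  by (simp add: dist_norm norm_eq_sqrt_inner inner_vec_def sum_2 power2_eq_square)

lemma heron_dist_eq_cross2:
  fixes x y z :: "real^2"
  shows "heron ((dist y z)\<^sup>2) ((dist z x)\<^sup>2) ((dist x y)\<^sup>2) = 4 * (cross2 (y - x) (z - x))\<^sup>2"
  unfolding heron_def cross2_def dist_vec2_sq by (simp add: algebra_simps power2_eq_square)

lemma cross2_cramer:
  fixes u v w :: "real^2"
  shows "cross2 u v *\<^sub>R w = cross2 u w *\<^sub>R v - cross2 v w *\<^sub>R u"
  by (simp add: vec_eq_iff forall_2 cross2_def algebra_simps)

lemma equal_areas_parallelogram:
  fixes p1 p2 p3 p4 :: "real^2"
  defines "\<alpha> \<equiv> cross2 (p2 - p1) (p3 - p1)"
  assumes "\<alpha> \<noteq> 0"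
    and "\<bar>cross2 (p2 - p1) (p4 - p1)\<bar> = \<bar>\<alpha>\<bar>"
    and "\<bar>cross2 (p3 - p1) (p4 - p1)\<bar> = \<bar>\<alpha>\<bar>"
    and "\<bar>cross2 (p3 - p2) (p4 - p2)\<bar> = \<bar>\<alpha>\<bar>"
  shows "p1 + p3 = p2 + p4 \<or> p1 + p4 = p2 + p3 \<or> p1 + p2 = p3 + p4"
proof -
  define \<beta> where "\<beta> = cross2 (p2 - p1) (p4 - p1)"
  define \<gamma> where "\<gamma> = cross2 (p3 - p1) (p4 - p1)"
  have "cross2 (p3 - p2) (p4 - p2) = \<alpha> - \<beta> + \<gamma>"
    unfolding \<alpha>_def \<beta>_def \<gamma>_def cross2_def by (simp add: algebra_simps)
  then have \<delta>: "\<bar>\<alpha> - \<beta> + \<gamma>\<bar> = \<bar>\<alpha>\<bar>" using assms(5) by simp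
  have cramer: "\<alpha> *\<^sub>R (p4 - p1) = \<beta> *\<^sub>R (p3 - p1) - \<gamma> *\<^sub>R (p2 - p1)"
    unfolding \<alpha>_def \<beta>_def \<gamma>_def by (rule cross2_cramer)
  have "\<beta> = \<alpha> \<or> \<beta> = - \<alpha>" "\<gamma> = \<alpha> \<or> \<gamma> = - \<alpha>"
    using assms(3,4) unfolding \<beta>_def \<gamma>_def by (simp_all add: abs_eq_iff)
  then consider "\<beta> = \<alpha>" "\<gamma> = \<alpha>" | "\<beta> = \<alpha>" "\<gamma> = - \<alpha>" | "\<beta> = - \<alpha>" "\<gamma> = - \<alpha>"
    | "\<beta> = - \<alpha>" "\<gamma> = \<alpha>" by blast
  then show ?thesis
  proof cases
    case 1
    then have "\<alpha> *\<^sub>R (p4 - p1) = \<alpha> *\<^sub>R (p3 - p2)" using cramer by (simp add: algebra_simps)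
    then have "p4 - p1 = p3 - p2" using assms(2) by simp
    then show ?thesis by (simp add: algebra_simps)
  next
    case 2
    then have "\<alpha> *\<^sub>R (p4 - p1) = \<alpha> *\<^sub>R ((p2 - p1) + (p3 - p1))" using cramer by (simp add: algebra_simps)
    then have "p4 - p1 = (p2 - p1) + (p3 - p1)" using assms(2) by simp
    then show ?thesis by (simp add: algebra_simps)
  next
    case 3
    then have "\<alpha> *\<^sub>R (p4 - p1) = \<alpha> *\<^sub>R (p2 - p3)" using cramer by (simp add: algebra_simps)
    then have "p4 - p1 = p2 - p3" using assms(2) by simp
    then show ?thesis by (simp add: algebra_simps)
  next
    case 4
    then show ?thesis using \<delta> assms(2) by simp
  qed
qed

lemma parallelogram_equal_diagonals_pythagoras:
  fixes a b c d :: "'a::real_inner"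
  assumes "a + c = b + d" and "dist a c = dist b d"
  shows "(dist a c)\<^sup>2 = (dist a b)\<^sup>2 + (dist b c)\<^sup>2"
proof -
  have d: "d = a + c - b" using assms(1) by (simp add: algebra_simps)
  have "(dist b d)\<^sup>2 = (dist a c)\<^sup>2 + 4 * inner (a - b) (c - b)"
    unfolding dist_norm power2_norm_eq_inner d by (simp add: inner_diff inner_add inner_commute algebra_simps)
  then have "inner (a - b) (c - b) = 0" using assms(2) by simp
  then show ?thesis
    unfolding dist_norm power2_norm_eq_inner by (simp add: inner_diff inner_commute algebra_simps)
qed

lemma parallelogram_pythag_zero:
  fixes a b c d :: "'a::real_inner"
  assumes "a + c = b + d"
    and abc: "tri_invariants a b c = sides_invariants X Y Z"
    and abd: "tri_invariants a b d = sides_invariants X Y Z"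
  shows "pythag X Y Z = 0"
proof -
  have "dist d a = dist b c"
  proof -
    have "d - a = c - b" using assms(1) by (simp add: algebra_simps)
    then show ?thesis by (simp add: dist_norm norm_minus_commute)
  qed
  moreover have "(dist b c)\<^sup>2 + (dist c a)\<^sup>2 = (dist b d)\<^sup>2 + (dist d a)\<^sup>2"
    using abc abd by (simp add: tri_invariants_def sides_invariants_def)
  ultimately have "dist a c = dist b d" by (simp add: dist_commute)
  then have "(dist b c)\<^sup>2 - (dist c a)\<^sup>2 + (dist a b)\<^sup>2 = 0"
    using parallelogram_equal_diagonals_pythagoras[OF assms(1)] by (simp add: dist_commute)
  then show ?thesis using abc by (auto simp: tri_invariants_def sides_invariants_def pythag_def)
qed

lemma four_points_same_invariants:
  fixes p1 p2 p3 p4 :: "real^2"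
  assumes "heron X Y Z \<noteq> 0" and "pythag X Y Z \<noteq> 0"
    and p123: "tri_invariants p1 p2 p3 = sides_invariants X Y Z"
    and p124: "tri_invariants p1 p2 p4 = sides_invariants X Y Z"
    and p134: "tri_invariants p1 p3 p4 = sides_invariants X Y Z"
    and p234: "tri_invariants p2 p3 p4 = sides_invariants X Y Z"
  shows False
proof -
  have area: "\<bar>cross2 (q - p) (r - p)\<bar> = sqrt (heron X Y Z) / 2"
    if "tri_invariants p q r = sides_invariants X Y Z" for p q r
  proof -
    have "4 * (cross2 (q - p) (r - p))\<^sup>2 = heron X Y Z"
      using that heron_dist_eq_cross2[of q r p] by (simp add: tri_invariants_def sides_invariants_def)
    then have "sqrt (heron X Y Z) = 2 * \<bar>cross2 (q - p) (r - p)\<bar>"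
      by (metis real_sqrt_abs real_sqrt_mult real_sqrt_four)
    then show ?thesis by simp
  qed
  have "cross2 (p2 - p1) (p3 - p1) \<noteq> 0"
    using assms(1) p123 heron_dist_eq_cross2[of p2 p3 p1] by (auto simp: tri_invariants_def sides_invariants_def)
  then have "p1 + p3 = p2 + p4 \<or> p1 + p4 = p2 + p3 \<or> p1 + p2 = p3 + p4"
    by (rule equal_areas_parallelogram) (simp_all only: area[OF p123] area[OF p124] area[OF p134] area[OF p234])
  then have "pythag X Y Z = 0"
  proof (elim disjE)
    assume "p1 + p3 = p2 + p4"
    then show ?thesis using p123 p124 by (rule parallelogram_pythag_zero)
  next
    assume "p1 + p4 = p2 + p3"
    then have "p2 + p3 = p1 + p4" ..
    then show ?thesis by (rule parallelogram_pythag_zero) (simp_all add: tri_invariants_swap p123 p124)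
  next
    assume "p1 + p2 = p3 + p4"
    then show ?thesis by (rule parallelogram_pythag_zero) (simp_all add: tri_invariants_swap p123 p134)
  qed
  with assms(2) show False ..
qed

lemma dist_Pair_Pair_le: "dist (a, b) (c, d) \<le> dist a c + dist b d"
  by (simp add: dist_Pair_Pair sqrt_sum_squares_le_sum)

lemma abs_dist_diff_le_dist_add: "\<bar>dist a b - dist c d\<bar> \<le> dist a c + dist b d"
  using dist_triangle2[of a b c] dist_triangle2[of b c d] dist_triangle3[of c d a] dist_triangle[of a d b]
  by arith

lemma eps_congruent_invariants_close:
  assumes "0 < a" "0 < b" "0 < c" and "\<eta> > 0"
  shows "\<exists>\<epsilon>>0. \<forall>x y z. eps_congruent (a, b, c) \<epsilon> x y z \<longrightarrow>
           dist (tri_invariants x y z) (sides_invariants (a\<^sup>2) (b\<^sup>2) (c\<^sup>2)) < \<eta>"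
proof -
  define g :: "real \<times> real \<times> real \<Rightarrow> real \<times> real \<times> real"
    where "g s = sides_invariants ((fst s)\<^sup>2) ((fst (snd s))\<^sup>2) ((snd (snd s))\<^sup>2)" for s
  have "isCont g (a, b, c)"
    unfolding g_def sides_invariants_def heron_def pythag_def by (intro continuous_intros)
  then obtain \<delta> where "\<delta> > 0" and \<delta>: "\<And>s. dist s (a, b, c) < \<delta> \<Longrightarrow> dist (g s) (g (a, b, c)) < \<eta>"
    using \<open>\<eta> > 0\<close> unfolding continuous_at_eps_delta by blast
  define m where "m = min a (min b c)"
  have "m > 0" using assms by (simp add: m_def)
  define \<epsilon> where "\<epsilon> = \<delta> / (8 * m)"
  have "\<epsilon> > 0" using \<open>\<delta> > 0\<close> \<open>m > 0\<close> by (simp add: \<epsilon>_def)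
  have "dist (tri_invariants x y z) (sides_invariants (a\<^sup>2) (b\<^sup>2) (c\<^sup>2)) < \<eta>"
    if congr: "eps_congruent (a, b, c) \<epsilon> x y z" for x y z
  proof -
    obtain A B C where "dist B C = a" "dist C A = b" "dist A B = c"
      and "dist x A \<le> \<epsilon> * m" "dist y B \<le> \<epsilon> * m" "dist z C \<le> \<epsilon> * m"
      using congr unfolding eps_congruent_def congruent_to_def m_def by auto
    then have "dist (dist y z) a + dist (dist z x) b + dist (dist x y) c \<le> 6 * (\<epsilon> * m)"
      using abs_dist_diff_le_dist_add[of y z B C] abs_dist_diff_le_dist_add[of z x C A] abs_dist_diff_le_dist_add[of x y A B]
      by (simp add: dist_real_def)
    also have "\<dots> < \<delta>" using \<open>\<delta> > 0\<close> \<open>m > 0\<close> by (simp add: \<epsilon>_def)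
    finally have "dist (dist y z, dist z x, dist x y) (a, b, c) < \<delta>"
      using dist_Pair_Pair_le[of "dist y z" "(dist z x, dist x y)" a "(b, c)"] dist_Pair_Pair_le[of "dist z x" "dist x y" b c] by linarith
    from \<delta>[OF this] show ?thesis by (simp add: g_def tri_invariants_def)
  qed
  with \<open>\<epsilon> > 0\<close> show ?thesis by blast
qed

lemma compact_continuous_pos_bounded_below:
  fixes f :: "'a::topological_space \<Rightarrow> real"
  assumes "compact K" and "continuous_on K f" and "\<And>x. x \<in> K \<Longrightarrow> 0 < f x"
  shows "\<exists>\<mu>>0. \<forall>x\<in>K. \<mu> \<le> f x"
proof (cases "K = {}")
  case False
  then obtain x0 where "x0 \<in> K" "\<forall>x\<in>K. f x0 \<le> f x"
    using continuous_attains_inf[OF assms(1) _ assms(2)] by blast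
  with assms(3) show ?thesis by blast
qed (auto intro!: exI[of _ 1])

definition quadruple_defect :: "real \<times> real \<times> real \<Rightarrow> 'a::metric_space \<Rightarrow> 'a \<Rightarrow> 'a \<Rightarrow> 'a \<Rightarrow> real" where
  "quadruple_defect s p1 p2 p3 p4 =
     dist (tri_invariants p1 p2 p3) s + dist (tri_invariants p1 p2 p4) s
   + dist (tri_invariants p1 p3 p4) s + dist (tri_invariants p2 p3 p4) s"

lemma quadruple_defect_translate:
  fixes p1 p2 p3 p4 t :: "'a::real_normed_vector"
  shows "quadruple_defect s (p1 - t) (p2 - t) (p3 - t) (p4 - t) = quadruple_defect s p1 p2 p3 p4"
  by (simp add: quadruple_defect_def tri_invariants_translate)

lemma quadruple_defect_pos:
  fixes p1 p2 p3 p4 :: "real^2"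
  assumes "heron X Y Z \<noteq> 0" and "pythag X Y Z \<noteq> 0"
  shows "0 < quadruple_defect (sides_invariants X Y Z) p1 p2 p3 p4"
proof (rule ccontr)
  assume "\<not> 0 < quadruple_defect (sides_invariants X Y Z) p1 p2 p3 p4"
  then have "dist (tri_invariants p1 p2 p3) (sides_invariants X Y Z) = 0"
    "dist (tri_invariants p1 p2 p4) (sides_invariants X Y Z) = 0"
    "dist (tri_invariants p1 p3 p4) (sides_invariants X Y Z) = 0"
    "dist (tri_invariants p2 p3 p4) (sides_invariants X Y Z) = 0"
    using zero_le_dist[of "tri_invariants p1 p2 p3" "sides_invariants X Y Z"]
      zero_le_dist[of "tri_invariants p1 p2 p4" "sides_invariants X Y Z"]
      zero_le_dist[of "tri_invariants p1 p3 p4" "sides_invariants X Y Z"]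
      zero_le_dist[of "tri_invariants p2 p3 p4" "sides_invariants X Y Z"]
    unfolding quadruple_defect_def by linarith+
  then have "tri_invariants p1 p2 p3 = sides_invariants X Y Z" "tri_invariants p1 p2 p4 = sides_invariants X Y Z"
    "tri_invariants p1 p3 p4 = sides_invariants X Y Z" "tri_invariants p2 p3 p4 = sides_invariants X Y Z"
    by simp_all
  with assms show False by (rule four_points_same_invariants)
qed

lemma side_bound_if_invariants_close:
  assumes "dist (tri_invariants x y z) (sides_invariants X Y Z) \<le> 1"
  shows "(dist x y)\<^sup>2 \<le> X + Y + Z + 1"
proof -
  have "dist (fst (snd (tri_invariants x y z))) (fst (snd (sides_invariants X Y Z))) \<le> 1"
    using dist_fst_le dist_snd_le assms by (meson order_trans)
  then have "(dist y z)\<^sup>2 + (dist z x)\<^sup>2 + (dist x y)\<^sup>2 \<le> X + Y + Z + 1"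
    by (simp add: tri_invariants_def sides_invariants_def dist_real_def abs_le_iff)
  then show ?thesis using zero_le_power2[of "dist y z"] zero_le_power2[of "dist z x"] by linarith
qed

lemma quadruple_defect_bounded_below:
  assumes "heron X Y Z \<noteq> 0" and "pythag X Y Z \<noteq> 0"
  shows "\<exists>\<mu>>0. \<forall>p1 p2 p3 p4 :: real^2. \<mu> \<le> quadruple_defect (sides_invariants X Y Z) p1 p2 p3 p4"
proof -
  define s where "s = sides_invariants X Y Z"
  define L where "L = sqrt (X + Y + Z + 1)"
  define K :: "((real^2) \<times> (real^2) \<times> (real^2)) set"
    where "K = cball 0 L \<times> cball 0 L \<times> cball 0 L"
  define G where "G q = quadruple_defect s 0 (fst q) (fst (snd q)) (snd (snd q))"
    for q :: "(real^2) \<times> (real^2) \<times> (real^2)"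
  have "compact K" by (simp add: K_def compact_Times)
  moreover have "continuous_on K G"
    unfolding G_def quadruple_defect_def tri_invariants_def sides_invariants_def heron_def pythag_def
    by (intro continuous_intros)
  moreover have "\<And>q. q \<in> K \<Longrightarrow> 0 < G q"
    using quadruple_defect_pos[OF assms] by (simp add: G_def s_def)
  ultimately obtain \<mu> where "\<mu> > 0" and \<mu>: "\<forall>q\<in>K. \<mu> \<le> G q"
    by (metis compact_continuous_pos_bounded_below)
  have "min 1 \<mu> \<le> quadruple_defect s p1 p2 p3 p4" for p1 p2 p3 p4 :: "real^2"
  proof (cases "quadruple_defect s p1 p2 p3 p4 < 1")
    case True
    then have "dist (tri_invariants p1 p2 p3) s \<le> 1" "dist (tri_invariants p1 p3 p4) s \<le> 1"
      "dist (tri_invariants p1 p4 p2) s \<le> 1"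
      using zero_le_dist[of "tri_invariants p1 p2 p3" s] zero_le_dist[of "tri_invariants p1 p2 p4" s]
        zero_le_dist[of "tri_invariants p1 p3 p4" s] zero_le_dist[of "tri_invariants p2 p3 p4" s]
      unfolding quadruple_defect_def tri_invariants_swap(2)[of p1 p4 p2] by linarith+
    then have "dist p1 p2 \<le> L" "dist p1 p3 \<le> L" "dist p1 p4 \<le> L"
      unfolding s_def L_def by (metis real_le_rsqrt side_bound_if_invariants_close)+
    then have "(p2 - p1, p3 - p1, p4 - p1) \<in> K"
      by (simp add: K_def dist_norm norm_minus_commute)
    then have "\<mu> \<le> G (p2 - p1, p3 - p1, p4 - p1)" using \<mu> by blast
    then show ?thesis using quadruple_defect_translate[of s p1 p1 p2 p3 p4] by (simp add: G_def)
  qed simp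
  then show ?thesis using \<open>\<mu> > 0\<close> unfolding s_def by (intro exI[of _ "min 1 \<mu>"]) auto
qed

lemma K43_copy_quadruple_defect_less:
  assumes "contains_copy (congr_hgraph T P \<epsilon>) K43"
    and close: "\<And>x y z. eps_congruent T \<epsilon> x y z \<Longrightarrow> dist (tri_invariants x y z) s < \<eta>"
  obtains p1 p2 p3 p4 :: "real^2" where "quadruple_defect s p1 p2 p3 p4 < 4 * \<eta>"
proof -
  obtain f :: "nat \<Rightarrow> real^2" where edges: "\<forall>e\<in>snd K43. f ` e \<in> snd (congr_hgraph T P \<epsilon>)"
    using assms(1) unfolding contains_copy_def by blast
  have face: "dist (tri_invariants p q r) s < \<eta>" if "{p, q, r} \<in> snd (congr_hgraph T P \<epsilon>)" for p q r
  proof -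
    from that obtain x y z where "{p, q, r} = {x, y, z}" and "eps_congruent T \<epsilon> x y z"
      unfolding congr_hgraph_def by auto
    then show ?thesis using close tri_invariants_eq_if_set_eq by metis
  qed
  have faces: "{f 1, f 2, f 3} \<in> snd (congr_hgraph T P \<epsilon>)" "{f 1, f 2, f 4} \<in> snd (congr_hgraph T P \<epsilon>)"
    "{f 1, f 3, f 4} \<in> snd (congr_hgraph T P \<epsilon>)" "{f 2, f 3, f 4} \<in> snd (congr_hgraph T P \<epsilon>)"
    using edges by (simp_all add: K43_def)
  have "quadruple_defect s (f 1) (f 2) (f 3) (f 4) < 4 * \<eta>"
    using face[OF faces(1)] face[OF faces(2)] face[OF faces(3)] face[OF faces(4)]
    unfolding quadruple_defect_def by linarith
  then show ?thesis by (rule that)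
qed

lemma heron_squares: "heron (a\<^sup>2) (b\<^sup>2) (c\<^sup>2) = (a + b + c) * (b + c - a) * (a + c - b) * (a + b - c)"
  unfolding heron_def by algebra

theorem lemma2p8:
  fixes T :: tri
  assumes "is_triangle T" and "no_right_angle T"
  shows "forbidden_for K43 T"
proof -
  obtain a b c where T: "T = (a, b, c)" by (cases T)
  define s where "s = sides_invariants (a\<^sup>2) (b\<^sup>2) (c\<^sup>2)"
  have sides: "0 < a" "0 < b" "0 < c" and "a < b + c" "b < a + c" "c < a + b"
    using assms(1) by (simp_all add: T is_triangle_def)
  then have heron: "heron (a\<^sup>2) (b\<^sup>2) (c\<^sup>2) \<noteq> 0" by (simp add: heron_squares)
  have pythag: "pythag (a\<^sup>2) (b\<^sup>2) (c\<^sup>2) \<noteq> 0"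
    using assms(2) by (simp add: T no_right_angle_def pythag_def)
  obtain \<mu> where "\<mu> > 0" and \<mu>: "\<And>p1 p2 p3 p4 :: real^2. \<mu> \<le> quadruple_defect s p1 p2 p3 p4"
    using quadruple_defect_bounded_below[OF heron pythag] unfolding s_def by blast
  then have "\<mu> / 4 > 0" by simp
  then obtain \<epsilon> where "\<epsilon> > 0"
    and close: "\<And>x y z. eps_congruent T \<epsilon> x y z \<Longrightarrow> dist (tri_invariants x y z) s < \<mu> / 4"
    using eps_congruent_invariants_close[OF sides] unfolding T s_def by blast
  have "\<not> quadruple_defect s p1 p2 p3 p4 < 4 * (\<mu> / 4)" for p1 p2 p3 p4 :: "real^2"
    using \<mu> by (simp add: not_less)
  then have "hfree (congr_hgraph T P \<epsilon>) K43" for P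
    using K43_copy_quadruple_defect_less[OF _ close] unfolding hfree_def by metis
  with \<open>\<epsilon> > 0\<close> show ?thesis unfolding forbidden_for_def by blast
qed

end
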